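(* Let $X$ be an order continuous rearrangement invariant sequence space with the Fatou property and let $F$ be an Orlicz function. Assume that the Calderón–Lozanovskiĭ class is closed under the Cesàro operator $C$. If $F$ vanishes only at zero and does not satisfy the $\Delta_2(0)$-condition, then the space $C(X_F)$ contains a lattice isometric copy of $\ell_\infty$.
   Context: A rearrangement invariant sequence space is a Banach space $X$ of real sequences with the ideal property ($|x|\le|y|$, $y\in X$ imply $x\in X$, $\|x\|_X\le\|y\|_X$), containing a sequence with all coordinates nonzero, in which equimeasurable sequences have equal norms. Order continuous: every $x\in X$ satisfies $\|x^{(n)}\|_X\to0$ whenever $0\le x^{(n)}\le|x|$, $x^{(n)}\downarrow0$. Fatou property: $0\le x^{(n)}\uparrow x$, $\sup\|x^{(n)}\|_X<\infty$ imply $x\in X$ and $\|x^{(n)}\|_X\uparrow\|x\|_X$. An Orlicz function is a non-decreasing convex $F:[0,\infty)\to[0,\infty]$ with $F(0)=0$. The Calderón–Lozanovskiĭ space $X_F$ consists of sequences $f$ with $\|f\|_{X_F}=\inf\{\lambda>0:\|F(|f|/\lambda)\|_X\le1\}<\infty$; the Calderón–Lozanovskiĭ class is $\{f\in X_F:\|F(|f|)\|_X<\infty\}$, and it is closed under $C$ if $f$ in the class implies $C(|f|)$ is in the class. The discrete Cesàro operator is $C(x)_n=\frac1n\sum_{k=1}^nx_k$, and $C(X_F)=\{x: C(|x|)\in X_F\}$ with norm $\|C(|x|)\|_{X_F}$. $F$ satisfies $\Delta_2(0)$ if there are $K>0$, $u_0>0$ with $F(u_0)>0$ and $F(2u)\le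 KF(u)$ for $0\le u\le u_0$. A lattice isometric copy of $\ell_\infty$ is the image of a linear isometric lattice-homomorphic embedding of $\ell_\infty$. *)

theory Defs
  imports Complex_Main "HOL-Library.Extended_Real"
begin

text \<open>Real sequences are functions nat => real; index 0 corresponds to the paper's index 1.
A sequence space is given by a carrier set X together with a norm function N (only
meaningful on X).\<close>

definition banach_seq_space :: "(nat \<Rightarrow> real) set \<Rightarrow> ((nat \<Rightarrow> real) \<Rightarrow> real) \<Rightarrow> bool" where
  "banach_seq_space X N \<longleftrightarrow>
     (\<lambda>n. 0) \<in> X \<and>
     (\<forall>x\<in>X. \<forall>y\<in>X. (\<lambda>n. x n + y n) \<in> X) \<and>
     (\<forall>x\<in>X. \<forall>c. (\<lambda>n. c * x n) \<in> X) \<and>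
     (\<forall>x\<in>X. 0 \<le> N x \<and> (N x = 0 \<longleftrightarrow> x = (\<lambda>n. 0))) \<and>
     (\<forall>x\<in>X. \<forall>c. N (\<lambda>n. c * x n) = \<bar>c\<bar> * N x) \<and>
     (\<forall>x\<in>X. \<forall>y\<in>X. N (\<lambda>n. x n + y n) \<le> N x + N y) \<and>
     (\<forall>s. (\<forall>k. s k \<in> X) \<and>
          (\<forall>e>0. \<exists>M. \<forall>m\<ge>M. \<forall>k\<ge>M. N (\<lambda>n. s m n - s k n) < e)
          \<longrightarrow> (\<exists>x\<in>X. (\<lambda>k. N (\<lambda>n. s k n - x n)) \<longlonglongrightarrow> 0))"

definition ideal_property :: "(nat \<Rightarrow> real) set \<Rightarrow> ((nat \<Rightarrow> real) \<Rightarrow> real) \<Rightarrow> bool" where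
  "ideal_property X N \<longleftrightarrow>
     (\<forall>x y. y \<in> X \<and> (\<forall>n. \<bar>x n\<bar> \<le> \<bar>y n\<bar>) \<longrightarrow> x \<in> X \<and> N x \<le> N y)"

text \<open>Equal distribution functions w.r.t. counting measure (size of level sets,
possibly infinite).\<close>
definition same_size :: "'a set \<Rightarrow> 'b set \<Rightarrow> bool" where
  "same_size A B \<longleftrightarrow> (finite A \<longleftrightarrow> finite B) \<and> card A = card B"

definition equimeasurable :: "(nat \<Rightarrow> real) \<Rightarrow> (nat \<Rightarrow> real) \<Rightarrow> bool" where
  "equimeasurable x y \<longleftrightarrow>
     (\<forall>t::real. t \<ge> 0 \<longrightarrow> same_size {n. \<bar>x n\<bar> > t} {n. \<bar>y n\<bar> > t})"

definition ri_seq_space :: "(nat \<Rightarrow> real) set \<Rightarrow> ((nat \<Rightarrow> real) \<Rightarrow> real) \<Rightarrow> bool" where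
  "ri_seq_space X N \<longleftrightarrow>
     banach_seq_space X N \<and> ideal_property X N \<and>
     (\<exists>x\<in>X. \<forall>n. x n \<noteq> 0) \<and>
     (\<forall>x\<in>X. \<forall>y. equimeasurable x y \<longrightarrow> y \<in> X \<and> N y = N x)"

definition order_continuous :: "(nat \<Rightarrow> real) set \<Rightarrow> ((nat \<Rightarrow> real) \<Rightarrow> real) \<Rightarrow> bool" where
  "order_continuous X N \<longleftrightarrow>
     (\<forall>x\<in>X. \<forall>s::nat \<Rightarrow> nat \<Rightarrow> real.
        (\<forall>k n. 0 \<le> s k n \<and> s k n \<le> \<bar>x n\<bar>) \<and>
        (\<forall>k n. s (Suc k) n \<le> s k n) \<and>
        (\<forall>n. (\<lambda>k. s k n) \<longlonglongrightarrow> 0)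
        \<longrightarrow> (\<lambda>k. N (s k)) \<longlonglongrightarrow> 0)"

definition fatou_property :: "(nat \<Rightarrow> real) set \<Rightarrow> ((nat \<Rightarrow> real) \<Rightarrow> real) \<Rightarrow> bool" where
  "fatou_property X N \<longleftrightarrow>
     (\<forall>x. \<forall>s::nat \<Rightarrow> nat \<Rightarrow> real.
        (\<forall>k n. 0 \<le> s k n \<and> s k n \<le> s (Suc k) n) \<and>
        (\<forall>n. (\<lambda>k. s k n) \<longlonglongrightarrow> x n) \<and>
        (\<forall>k. s k \<in> X) \<and> (\<exists>B. \<forall>k. N (s k) \<le> B)
        \<longrightarrow> x \<in> X \<and> (\<lambda>k. N (s k)) \<longlonglongrightarrow> N x)"

text \<open>Orlicz functions may take the value infinity, hence values in ereal; only
arguments u >= 0 are relevant.\<close>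
definition orlicz :: "(real \<Rightarrow> ereal) \<Rightarrow> bool" where
  "orlicz F \<longleftrightarrow> F 0 = 0 \<and> (\<forall>u\<ge>0. 0 \<le> F u) \<and>
     (\<forall>u v. 0 \<le> u \<and> u \<le> v \<longrightarrow> F u \<le> F v) \<and>
     (\<forall>u v t. 0 \<le> u \<and> 0 \<le> v \<and> 0 \<le> t \<and> t \<le> 1 \<longrightarrow>
        F (t * u + (1 - t) * v) \<le> ereal t * F u + ereal (1 - t) * F v)"

definition Fcomp :: "(real \<Rightarrow> ereal) \<Rightarrow> (nat \<Rightarrow> real) \<Rightarrow> (nat \<Rightarrow> real)" where
  "Fcomp F f = (\<lambda>n. real_of_ereal (F \<bar>f n\<bar>))"

definition F_in :: "(nat \<Rightarrow> real) set \<Rightarrow> (real \<Rightarrow> ereal) \<Rightarrow> (nat \<Rightarrow> real) \<Rightarrow> bool" where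
  "F_in X F f \<longleftrightarrow> (\<forall>n. F \<bar>f n\<bar> \<noteq> \<infinity>) \<and> Fcomp F f \<in> X"

definition CL_admissible :: "(nat \<Rightarrow> real) set \<Rightarrow> ((nat \<Rightarrow> real) \<Rightarrow> real) \<Rightarrow> (real \<Rightarrow> ereal)
    \<Rightarrow> (nat \<Rightarrow> real) \<Rightarrow> real \<Rightarrow> bool" where
  "CL_admissible X N F f r \<longleftrightarrow> r > 0 \<and> F_in X F (\<lambda>n. f n / r) \<and> N (Fcomp F (\<lambda>n. f n / r)) \<le> 1"

definition CL_space :: "(nat \<Rightarrow> real) set \<Rightarrow> ((nat \<Rightarrow> real) \<Rightarrow> real) \<Rightarrow> (real \<Rightarrow> ereal)
    \<Rightarrow> (nat \<Rightarrow> real) set" where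
  "CL_space X N F = {f. \<exists>r. CL_admissible X N F f r}"

definition CL_norm :: "(nat \<Rightarrow> real) set \<Rightarrow> ((nat \<Rightarrow> real) \<Rightarrow> real) \<Rightarrow> (real \<Rightarrow> ereal)
    \<Rightarrow> (nat \<Rightarrow> real) \<Rightarrow> real" where
  "CL_norm X N F f = Inf {r. CL_admissible X N F f r}"

definition CL_class :: "(nat \<Rightarrow> real) set \<Rightarrow> ((nat \<Rightarrow> real) \<Rightarrow> real) \<Rightarrow> (real \<Rightarrow> ereal)
    \<Rightarrow> (nat \<Rightarrow> real) set" where
  "CL_class X N F = {f \<in> CL_space X N F. F_in X F f}"

definition cesaro :: "(nat \<Rightarrow> real) \<Rightarrow> (nat \<Rightarrow> real)" where
  "cesaro x = (\<lambda>n. (\<Sum>k\<le>n. x k) / real (Suc n))"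

definition CL_class_closed_under_cesaro ::
  "(nat \<Rightarrow> real) set \<Rightarrow> ((nat \<Rightarrow> real) \<Rightarrow> real) \<Rightarrow> (real \<Rightarrow> ereal) \<Rightarrow> bool" where
  "CL_class_closed_under_cesaro X N F \<longleftrightarrow>
     (\<forall>f \<in> CL_class X N F. cesaro (\<lambda>n. \<bar>f n\<bar>) \<in> CL_class X N F)"

definition cesaro_space :: "(nat \<Rightarrow> real) set \<Rightarrow> ((nat \<Rightarrow> real) \<Rightarrow> real) \<Rightarrow> (real \<Rightarrow> ereal)
    \<Rightarrow> (nat \<Rightarrow> real) set" where
  "cesaro_space X N F = {x. cesaro (\<lambda>n. \<bar>x n\<bar>) \<in> CL_space X N F}"

definition cesaro_norm :: "(nat \<Rightarrow> real) set \<Rightarrow> ((nat \<Rightarrow> real) \<Rightarrow> real) \<Rightarrow> (real \<Rightarrow> ereal)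
    \<Rightarrow> (nat \<Rightarrow> real) \<Rightarrow> real" where
  "cesaro_norm X N F x = CL_norm X N F (cesaro (\<lambda>n. \<bar>x n\<bar>))"

definition delta2_zero :: "(real \<Rightarrow> ereal) \<Rightarrow> bool" where
  "delta2_zero F \<longleftrightarrow> (\<exists>K>0. \<exists>u0>0. F u0 > 0 \<and>
      (\<forall>u. 0 \<le> u \<and> u \<le> u0 \<longrightarrow> F (2 * u) \<le> ereal K * F u))"

definition linf :: "(nat \<Rightarrow> real) set" where
  "linf = {a. bdd_above (range (\<lambda>n. \<bar>a n\<bar>))}"

definition linf_norm :: "(nat \<Rightarrow> real) \<Rightarrow> real" where
  "linf_norm a = (SUP n. \<bar>a n\<bar>)"

definition contains_lattice_isometric_linf ::
  "(nat \<Rightarrow> real) set \<Rightarrow> ((nat \<Rightarrow> real) \<Rightarrow> real) \<Rightarrow> bool" where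
  "contains_lattice_isometric_linf E NE \<longleftrightarrow>
     (\<exists>T :: (nat \<Rightarrow> real) \<Rightarrow> (nat \<Rightarrow> real).
        (\<forall>a\<in>linf. T a \<in> E) \<and>
        (\<forall>a\<in>linf. \<forall>b\<in>linf. T (\<lambda>n. a n + b n) = (\<lambda>n. T a n + T b n)) \<and>
        (\<forall>a\<in>linf. \<forall>c. T (\<lambda>n. c * a n) = (\<lambda>n. c * T a n)) \<and>
        (\<forall>a\<in>linf. NE (T a) = linf_norm a) \<and>
        (\<forall>a\<in>linf. \<forall>b\<in>linf. T (\<lambda>n. max (a n) (b n)) = (\<lambda>n. max (T a n) (T b n))))"

end

theory Submission
  imports Defs "HOL-Library.Nat_Bijection"
begin

text \<open>
  Since \<open>F\<close> fails \<open>\<Delta>\<^sub>2(0)\<close>, there are levels \<open>u\<^sub>k \<down> 0\<close> with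
  \<open>F(2u\<^sub>k) > (k+1) 2\<^sup>k\<^sup>+\<^sup>3 F(u\<^sub>k)\<close>. The fundamental function of \<open>X\<close> is unbounded
  (order continuity plus the Fatou property), so repeating \<open>u\<^sub>k\<close> on suitably long
  consecutive blocks gives a decreasing step sequence \<open>f\<close> with \<open>F(f) \<in> X\<close> but
  \<open>F(2f) \<notin> X\<close>. By closedness of the class, \<open>F(Cf) \<in> X\<close>, and
  \<open>s = inf {\<lambda> > 0. F(Cf/\<lambda>) \<in> X}\<close> lies in \<open>[1/2, 1]\<close>.

  The Cesaro means of every tail of \<open>f\<close> dominate \<open>Cf\<close> up to a harmonic error,
  which closedness keeps inside the class; by convexity of \<open>F\<close> the tails of \<open>f\<close>
  therefore still fail at every scale below \<open>s\<close>. On the other hand order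
  continuity makes the tails of \<open>F(Cf/\<lambda>)\<close>, \<open>\<lambda> > s\<close>, small in norm. Hence there are
  cut points \<open>M\<^sub>0 < M\<^sub>1 < \<dots>\<close> such that \<open>y = f/(s(1+\<epsilon>\<^sub>k))\<close> on \<open>[M\<^sub>k, M\<^sub>k\<^sub>+\<^sub>1)\<close>
  satisfies \<open>\<parallel>F(Cy)\<parallel> \<le> 1\<close>, while the \<open>k\<close>-th block of \<open>f\<close>, scaled by \<open>1/(s(1-\<epsilon>\<^sub>k))\<close>,
  has \<open>\<parallel>F(C \<cdot>)\<parallel> \<ge> k\<close>. Enumerating the blocks by pairs \<open>(j, i)\<close> and multiplying
  \<open>y\<close> on the blocks \<open>(j, _)\<close> by \<open>a\<^sub>j\<close> maps \<open>\<ell>\<^sub>\<infinity>\<close> lattice isometrically into \<open>C(X\<^sub>F)\<close>: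
  every coordinate is repeated on blocks of arbitrarily large index.
\<close>

definition block_index :: "(nat \<Rightarrow> nat) \<Rightarrow> nat \<Rightarrow> nat" where
  "block_index S n = (LEAST k. n < S (Suc k))"

lemma block_index_bounds:
  assumes S: "strict_mono (S :: nat \<Rightarrow> nat)" and n: "S 0 \<le> n"
  shows "S (block_index S n) \<le> n \<and> n < S (Suc (block_index S n))"
proof -
  have ex: "\<exists>k. n < S (Suc k)"
    using strict_mono_imp_increasing[OF S, of "Suc n"] by (intro exI[of _ n]) simp
  have upper: "n < S (Suc (block_index S n))"
    unfolding block_index_def by (rule LeastI_ex[OF ex])
  have lower: "S (block_index S n) \<le> n"
  proof (cases "block_index S n")
    case 0
    then show ?thesis using n by simp
  next
    case (Suc j)
    then have "j < block_index S n" by simp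
    then have "\<not> n < S (Suc j)" unfolding block_index_def by (rule not_less_Least)
    then show ?thesis using Suc by simp
  qed
  from lower upper show ?thesis ..
qed

lemma block_index_eqI:
  assumes S: "strict_mono (S :: nat \<Rightarrow> nat)" and n: "S k \<le> n" "n < S (Suc k)"
  shows "block_index S n = k"
proof -
  have "S 0 \<le> n" using n(1) strict_mono_less_eq[OF S, of 0 k] by simp
  note bounds = block_index_bounds[OF S this]
  show ?thesis
  proof (rule linorder_cases[of "block_index S n" k])
    assume "block_index S n < k"
    then have "S (Suc (block_index S n)) \<le> S k" using strict_mono_less_eq[OF S] by simp
    then show ?thesis using bounds n by simp
  next
    assume "k < block_index S n"
    then have "S (Suc k) \<le> S (block_index S n)" using strict_mono_less_eq[OF S] by simp
    then show ?thesis using bounds n by simp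
  qed
qed

lemma block_index_mono:
  assumes S: "strict_mono (S :: nat \<Rightarrow> nat)" and n: "S 0 \<le> n" "n \<le> n'"
  shows "block_index S n \<le> block_index S n'"
proof (rule ccontr)
  assume "\<not> ?thesis"
  then have "S (Suc (block_index S n')) \<le> S (block_index S n)"
    using strict_mono_less_eq[OF S] by simp
  then show False using block_index_bounds[OF S n(1)] block_index_bounds[OF S, of n'] n by simp
qed

lemma cesaro_mono: "(\<And>i. i \<le> n \<Longrightarrow> x i \<le> y i) \<Longrightarrow> cesaro x n \<le> cesaro y n"
  unfolding cesaro_def by (intro divide_right_mono sum_mono) auto

lemma cesaro_nonneg: "(\<And>i. 0 \<le> x i) \<Longrightarrow> 0 \<le> cesaro x n"
  unfolding cesaro_def by (intro divide_nonneg_nonneg sum_nonneg) auto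

lemma cesaro_cmult: "cesaro (\<lambda>i. c * x i) n = c * cesaro x n"
  unfolding cesaro_def by (simp add: sum_distrib_left)

lemma cesaro_cong: "(\<And>i. i \<le> n \<Longrightarrow> x i = y i) \<Longrightarrow> cesaro x n = cesaro y n"
  unfolding cesaro_def by (metis (no_types, lifting) atMost_iff sum.cong)

lemma cesaro_const: "cesaro (\<lambda>i. c) n = c"
  unfolding cesaro_def by simp

lemma cesaro_le_const: "(\<And>i. x i \<le> c) \<Longrightarrow> cesaro x n \<le> c"
  using cesaro_mono[of n x "\<lambda>i. c"] by (simp add: cesaro_const)

lemma cesaro_ge_const: "(\<And>i. i \<le> n \<Longrightarrow> c \<le> x i) \<Longrightarrow> c \<le> cesaro x n"
  using cesaro_mono[of n "\<lambda>i. c" x] by (simp add: cesaro_const)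

lemma cesaro_prefix_indicator:
  "cesaro (\<lambda>i. if i < L then c else 0) n = c * real (min (Suc n) L) / real (Suc n)"
proof -
  have "(\<Sum>i\<le>n. if i < L then c else 0) = c * real (min (Suc n) L)"
  proof (induction n)
    case 0
    then show ?case by (cases L) auto
  next
    case (Suc n)
    then show ?case by (cases "Suc n < L") (auto simp: min_def algebra_simps)
  qed
  then show ?thesis unfolding cesaro_def by simp
qed

definition tail :: "nat \<Rightarrow> (nat \<Rightarrow> real) \<Rightarrow> nat \<Rightarrow> real" where
  "tail M x = (\<lambda>n. if M \<le> n then x n else 0)"

lemma cesaro_le_cesaro_tail:
  assumes x: "\<And>i. 0 \<le> x i"
  shows "cesaro x n \<le> cesaro (tail M x) n + (\<Sum>i<M. x i) / real (Suc n)"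
proof -
  have "(\<Sum>i\<le>n. x i) = (\<Sum>i\<le>n. tail M x i) + (\<Sum>i\<le>n. if i < M then x i else 0)"
    by (simp add: sum.distrib[symmetric] tail_def) (rule sum.cong, auto)
  also have "(\<Sum>i\<le>n. if i < M then x i else 0) = (\<Sum>i\<in>{..n} \<inter> {..<M}. x i)"
    by (simp add: sum.inter_restrict)
  also have "\<dots> \<le> (\<Sum>i<M. x i)" by (rule sum_mono2) (auto simp: x)
  finally show ?thesis
    unfolding cesaro_def add_divide_distrib[symmetric] by (rule divide_right_mono) simp_all
qed

lemma Inf_pos_ge: "0 \<le> (c :: real) \<Longrightarrow> Inf {r. 0 < r \<and> c \<le> r} = c"
proof (cases "c = 0")
  case True
  then have "{r. 0 < r \<and> c \<le> r} = {0<..}" by auto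
  then show ?thesis using True by simp
next
  case False
  assume "0 \<le> c"
  with False have "{r. 0 < r \<and> c \<le> r} = {c..}" by auto
  then show ?thesis by simp
qed

lemma LIMSEQ_eventually_eq: "(\<And>k. K \<le> k \<Longrightarrow> f k = l) \<Longrightarrow> f \<longlonglongrightarrow> l"
  by (rule tendsto_eventually) (auto simp: eventually_sequentially)

lemma linf_abs_le_norm: "a \<in> linf \<Longrightarrow> \<bar>a j\<bar> \<le> linf_norm a"
  unfolding linf_def linf_norm_def by (rule cSUP_upper) auto

lemma linf_norm_le: "(\<And>j. \<bar>a j\<bar> \<le> r) \<Longrightarrow> linf_norm a \<le> r"
  unfolding linf_norm_def by (rule cSUP_least) auto

definition interval_ind :: "nat \<Rightarrow> nat \<Rightarrow> nat \<Rightarrow> real" where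
  "interval_ind a m = (\<lambda>n. if a \<le> n \<and> n < a + m then 1 else 0)"

lemma equimeasurable_interval_ind: "equimeasurable (interval_ind 0 m) (interval_ind a m)"
  unfolding equimeasurable_def same_size_def
proof (intro allI impI)
  fix t :: real
  assume t: "0 \<le> t"
  show "(finite {n. t < \<bar>interval_ind 0 m n\<bar>} = finite {n. t < \<bar>interval_ind a m n\<bar>}) \<and>
        card {n. t < \<bar>interval_ind 0 m n\<bar>} = card {n. t < \<bar>interval_ind a m n\<bar>}"
  proof (cases "t < 1")
    case True
    then have "{n. t < \<bar>interval_ind 0 m n\<bar>} = {0..<m}" "{n. t < \<bar>interval_ind a m n\<bar>} = {a..<a+m}"
      using t by (auto simp: interval_ind_def)
    then show ?thesis by simp
  next
    case False
    then have "{n. t < \<bar>interval_ind 0 m n\<bar>} = {}" "{n. t < \<bar>interval_ind a m n\<bar>} = {}"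
      using t by (auto simp: interval_ind_def)
    then show ?thesis by simp
  qed
qed

locale ri_space =
  fixes X :: "(nat \<Rightarrow> real) set" and N :: "(nat \<Rightarrow> real) \<Rightarrow> real"
  assumes ri: "ri_seq_space X N"
begin

lemma banach: "banach_seq_space X N"
  using ri by (simp add: ri_seq_space_def)

lemma zero_mem: "(\<lambda>n. 0) \<in> X"
  using banach unfolding banach_seq_space_def by blast

lemma add_mem: "x \<in> X \<Longrightarrow> y \<in> X \<Longrightarrow> (\<lambda>n. x n + y n) \<in> X"
  using banach unfolding banach_seq_space_def by blast

lemma scale_mem: "x \<in> X \<Longrightarrow> (\<lambda>n. c * x n) \<in> X"
  using banach unfolding banach_seq_space_def by blast

lemma norm_nonneg: "x \<in> X \<Longrightarrow> 0 \<le> N x"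
  using banach unfolding banach_seq_space_def by blast

lemma norm_eq_zero_iff: "x \<in> X \<Longrightarrow> N x = 0 \<longleftrightarrow> x = (\<lambda>n. 0)"
  using banach unfolding banach_seq_space_def by blast

lemma norm_scale: "x \<in> X \<Longrightarrow> N (\<lambda>n. c * x n) = \<bar>c\<bar> * N x"
  using banach unfolding banach_seq_space_def by blast

lemma norm_triangle: "x \<in> X \<Longrightarrow> y \<in> X \<Longrightarrow> N (\<lambda>n. x n + y n) \<le> N x + N y"
  using banach unfolding banach_seq_space_def by blast

lemma ideal: "y \<in> X \<Longrightarrow> (\<And>n. \<bar>x n\<bar> \<le> \<bar>y n\<bar>) \<Longrightarrow> x \<in> X \<and> N x \<le> N y"
  using ri unfolding ri_seq_space_def ideal_property_def by blast

lemma equimeasurable_norm: "x \<in> X \<Longrightarrow> equimeasurable x y \<Longrightarrow> y \<in> X \<and> N y = N x"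
  using ri unfolding ri_seq_space_def by blast

lemma single_mem: "(\<lambda>n. if n = m then c else 0) \<in> X"
proof -
  obtain x where x: "x \<in> X" "\<forall>n. x n \<noteq> 0"
    using ri unfolding ri_seq_space_def by blast
  have "\<bar>if n = m then c else 0\<bar> \<le> \<bar>(c / x m) * x n\<bar>" for n
    using x(2) by (cases "n = m") auto
  from ideal[OF scale_mem[OF x(1)] this] show ?thesis by blast
qed

lemma finite_support_mem: "(\<And>n. L \<le> n \<Longrightarrow> v n = 0) \<Longrightarrow> v \<in> X"
proof (induction L arbitrary: v)
  case 0
  then have "v = (\<lambda>n. 0)" by auto
  then show ?case using zero_mem by simp
next
  case (Suc L)
  let ?v = "\<lambda>n. if n = L then 0 else v n"
  have "?v \<in> X" by (rule Suc.IH) (use Suc.prems in auto)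
  from add_mem[OF this single_mem] have "(\<lambda>n. ?v n + (if n = L then v L else 0)) \<in> X" .
  moreover have "(\<lambda>n. ?v n + (if n = L then v L else 0)) = v" by auto
  ultimately show ?case by simp
qed

lemma tail_mem: "w \<in> X \<Longrightarrow> tail M w \<in> X \<and> N (tail M w) \<le> N w"
  by (rule ideal) (auto simp: tail_def)

definition fundamental :: "nat \<Rightarrow> real" where
  "fundamental m = N (interval_ind 0 m)"

lemma interval_ind_mem: "interval_ind a m \<in> X"
  by (rule finite_support_mem[of "a + m"]) (simp add: interval_ind_def)

lemma norm_interval_ind: "N (interval_ind a m) = fundamental m"
  using equimeasurable_norm[OF interval_ind_mem equimeasurable_interval_ind]
    unfolding fundamental_def by simp

lemma norm_scaled_interval_ind: "N (\<lambda>n. c * interval_ind a m n) = \<bar>c\<bar> * fundamental m"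
  using norm_scale[OF interval_ind_mem] norm_interval_ind by simp

lemma fundamental_0: "fundamental 0 = 0"
proof -
  have "interval_ind 0 0 = (\<lambda>n. 0)" by (simp add: interval_ind_def)
  then show ?thesis unfolding fundamental_def using norm_eq_zero_iff[OF zero_mem] by simp
qed

lemma fundamental_nonneg: "0 \<le> fundamental m"
  unfolding fundamental_def by (rule norm_nonneg[OF interval_ind_mem])

lemma fundamental_Suc_le: "fundamental (Suc m) \<le> fundamental m + fundamental 1"
proof -
  have "interval_ind 0 (Suc m) = (\<lambda>n. interval_ind 0 m n + interval_ind m 1 n)"
    by (auto simp: interval_ind_def)
  then have "fundamental (Suc m) = N (\<lambda>n. interval_ind 0 m n + interval_ind m 1 n)"
    unfolding fundamental_def by simp
  also have "\<dots> \<le> fundamental m + fundamental 1"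
    using norm_triangle[OF interval_ind_mem interval_ind_mem] norm_interval_ind by simp
  finally show ?thesis .
qed

lemma fundamental_1_pos: "0 < fundamental 1"
proof -
  have "interval_ind 0 1 \<noteq> (\<lambda>n. 0)" by (auto simp: interval_ind_def fun_eq_iff)
  then have "fundamental 1 \<noteq> 0" unfolding fundamental_def
    using norm_eq_zero_iff[OF interval_ind_mem] by simp
  then show ?thesis using fundamental_nonneg[of 1] by simp
qed

lemma norm_prefix_blocks_le:
  assumes S: "strict_mono S"
    and blocks: "\<And>K. N (\<lambda>n. if S K \<le> n \<and> n < S (Suc K) then g n else 0) \<le> (1/2) ^ Suc K"
  shows "N (\<lambda>n. if S 0 \<le> n \<and> n < S K then g n else 0) \<le> 1 - (1/2) ^ K"
proof (induction K)
  case 0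
  have "(\<lambda>n. if S 0 \<le> n \<and> n < S 0 then g n else 0) = (\<lambda>n. 0)" by auto
  then show ?case using norm_eq_zero_iff[OF zero_mem] by simp
next
  case (Suc K)
  let ?G = "\<lambda>K n. if S 0 \<le> n \<and> n < S K then g n else 0"
  let ?block = "\<lambda>n. if S K \<le> n \<and> n < S (Suc K) then g n else 0"
  have "S 0 \<le> S K" "S K < S (Suc K)"
    using strict_mono_less_eq[OF S, of 0 K] strict_monoD[OF S, of K "Suc K"] by auto
  then have "?G (Suc K) = (\<lambda>n. ?G K n + ?block n)" by (auto simp: fun_eq_iff)
  moreover have "?G K \<in> X" "?block \<in> X"
    by (rule finite_support_mem[of "S K"], simp) (rule finite_support_mem[of "S (Suc K)"], simp)
  ultimately have "N (?G (Suc K)) \<le> N (?G K) + N ?block" using norm_triangle by simp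
  also have "\<dots> \<le> 1 - (1/2) ^ K + (1/2) ^ Suc K" using Suc blocks[of K] by linarith
  finally show ?case by simp
qed

end

locale ri_space_oc_fatou = ri_space +
  assumes order_cont: "order_continuous X N" and fatou_prop: "fatou_property X N"
begin

lemma fatou:
  assumes "\<And>k n. 0 \<le> s k n" "\<And>k n. s k n \<le> s (Suc k) n"
    and "\<And>n. (\<lambda>k. s k n) \<longlonglongrightarrow> x n" and "\<And>k. s k \<in> X" and "\<And>k. N (s k) \<le> B"
  shows "x \<in> X \<and> (\<lambda>k. N (s k)) \<longlonglongrightarrow> N x"
  using fatou_prop assms unfolding fatou_property_def by blast

lemma tail_norm_tendsto_zero:
  assumes w: "w \<in> X" "\<And>n. 0 \<le> w n"
  shows "(\<lambda>M. N (tail M w)) \<longlonglongrightarrow> 0"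
proof -
  have "\<forall>s. (\<forall>k n. 0 \<le> s k n \<and> s k n \<le> \<bar>w n\<bar>) \<and> (\<forall>k n. s (Suc k) n \<le> s k n) \<and>
      (\<forall>n. (\<lambda>k. s k n) \<longlonglongrightarrow> 0) \<longrightarrow> (\<lambda>k. N (s k)) \<longlonglongrightarrow> 0"
    using order_cont w(1) unfolding order_continuous_def by blast
  moreover have "(\<lambda>M. tail M w n) \<longlonglongrightarrow> 0" for n
    by (rule LIMSEQ_eventually_eq[of "Suc n"]) (simp add: tail_def)
  ultimately show ?thesis using w(2) by (auto simp: tail_def)
qed

text \<open>Otherwise the constant sequence \<open>1\<close> would lie in \<open>X\<close> by the Fatou property,
  and order continuity would force its tails, each of norm at least \<open>fundamental 1\<close>, to
  have norms tending to \<open>0\<close>.\<close>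
lemma fundamental_unbounded: "\<exists>m. B < fundamental m"
proof (rule ccontr)
  assume "\<not> ?thesis"
  then have bounded: "fundamental m \<le> B" for m by (simp add: not_less)
  have "(\<lambda>n. 1) \<in> X \<and> (\<lambda>k. N (interval_ind 0 k)) \<longlonglongrightarrow> N (\<lambda>n. 1)"
  proof (rule fatou[where B = B])
    show "(\<lambda>k. interval_ind 0 k n) \<longlonglongrightarrow> 1" for n
      by (rule LIMSEQ_eventually_eq[of "Suc n"]) (simp add: interval_ind_def)
    show "N (interval_ind 0 k) \<le> B" for k using bounded fundamental_def by simp
    show "interval_ind 0 k \<in> X" for k by (rule interval_ind_mem)
  qed (auto simp: interval_ind_def)
  then have one: "(\<lambda>n. 1) \<in> X" ..
  have tail_one: "fundamental 1 \<le> N (tail k (\<lambda>n. 1))" for k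
  proof -
    have tail_k: "tail k (\<lambda>n. 1) \<in> X" using tail_mem[OF one] by blast
    have "interval_ind k 1 \<in> X \<and> N (interval_ind k 1) \<le> N (tail k (\<lambda>n. 1))"
      by (rule ideal[OF tail_k]) (simp add: interval_ind_def tail_def)
    then show ?thesis using norm_interval_ind by simp
  qed
  have "fundamental 1 \<le> 0"
    by (rule LIMSEQ_le_const[OF tail_norm_tendsto_zero[OF one]]) (use tail_one in auto)
  then show False using fundamental_1_pos by simp
qed

lemma blockwise_fatou:
  assumes S: "strict_mono S" and g: "\<And>n. 0 \<le> g n"
    and blocks: "\<And>K. N (\<lambda>n. if S K \<le> n \<and> n < S (Suc K) then g n else 0) \<le> (1/2) ^ Suc K"
  shows "tail (S 0) g \<in> X \<and> N (tail (S 0) g) \<le> 1"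
proof -
  define G where "G K n = (if S 0 \<le> n \<and> n < S K then g n else 0)" for K n
  have G_le_1: "N (G K) \<le> 1" for K
    using norm_prefix_blocks_le[OF S blocks, of K] zero_less_power[of "1/2::real" K]
    unfolding G_def by linarith
  have lim: "tail (S 0) g \<in> X \<and> (\<lambda>K. N (G K)) \<longlonglongrightarrow> N (tail (S 0) g)"
  proof (rule fatou[where B = 1])
    show "G K n \<le> G (Suc K) n" for K n
      using g strict_monoD[OF S, of K "Suc K"] by (auto simp: G_def)
    show "(\<lambda>K. G K n) \<longlonglongrightarrow> tail (S 0) g n" for n
    proof (rule LIMSEQ_eventually_eq[of "Suc n"])
      fix K
      assume "Suc n \<le> K"
      then have "n < S K" using strict_mono_imp_increasing[OF S, of K] by simp
      then show "G K n = tail (S 0) g n" by (simp add: G_def tail_def)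
    qed
    show "G K \<in> X" for K by (rule finite_support_mem[of "S K"]) (simp add: G_def)
  qed (use g G_le_1 in \<open>auto simp: G_def\<close>)
  have "N (tail (S 0) g) \<le> 1"
    by (rule LIMSEQ_le_const2[OF conjunct2[OF lim]]) (use G_le_1 in auto)
  with lim show ?thesis by blast
qed

end

locale orlicz_fn =
  fixes F :: "real \<Rightarrow> ereal"
  assumes orlicz: "orlicz F"
begin

lemma F_zero: "F 0 = 0"
  using orlicz unfolding orlicz_def by blast

lemma F_nonneg: "0 \<le> u \<Longrightarrow> 0 \<le> F u"
  using orlicz unfolding orlicz_def by blast

lemma F_mono: "0 \<le> u \<Longrightarrow> u \<le> v \<Longrightarrow> F u \<le> F v"
  using orlicz unfolding orlicz_def by blast

lemma F_convex: "0 \<le> u \<Longrightarrow> 0 \<le> v \<Longrightarrow> 0 \<le> t \<Longrightarrow> t \<le> 1 \<Longrightarrow>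
    F (t * u + (1 - t) * v) \<le> ereal t * F u + ereal (1 - t) * F v"
  using orlicz unfolding orlicz_def by blast

lemma F_finite_le: "0 \<le> u \<Longrightarrow> u \<le> v \<Longrightarrow> F v \<noteq> \<infinity> \<Longrightarrow> F u \<noteq> \<infinity>"
  using F_mono by (metis ereal_infty_less_eq(1))

definition Freal :: "real \<Rightarrow> real" where
  "Freal u = real_of_ereal (F u)"

lemma Fcomp_eq: "Fcomp F v n = Freal \<bar>v n\<bar>"
  by (simp add: Fcomp_def Freal_def)

lemma Freal_nonneg: "0 \<le> u \<Longrightarrow> 0 \<le> Freal u"
  unfolding Freal_def by (rule real_of_ereal_pos, rule F_nonneg)

lemma Fcomp_nonneg: "0 \<le> Fcomp F v n"
  by (simp add: Fcomp_eq Freal_nonneg)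

lemma F_eq_ereal_Freal: "0 \<le> u \<Longrightarrow> F u \<noteq> \<infinity> \<Longrightarrow> F u = ereal (Freal u)"
  using F_nonneg[of u] unfolding Freal_def by (cases "F u") auto

lemma Freal_mono: "0 \<le> u \<Longrightarrow> u \<le> v \<Longrightarrow> F v \<noteq> \<infinity> \<Longrightarrow> Freal u \<le> Freal v"
  unfolding Freal_def by (rule real_of_ereal_positive_mono) (auto intro: F_nonneg F_mono)

lemma Freal_convex:
  assumes "0 \<le> u" "0 \<le> v" "0 \<le> t" "t \<le> 1" "F u \<noteq> \<infinity>" "F v \<noteq> \<infinity>"
  shows "F (t * u + (1 - t) * v) \<noteq> \<infinity> \<and>
    Freal (t * u + (1 - t) * v) \<le> t * Freal u + (1 - t) * Freal v"
proof -
  have "F (t * u + (1 - t) * v) \<le> ereal t * F u + ereal (1 - t) * F v"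
    by (rule F_convex) (use assms in auto)
  also have "\<dots> = ereal (t * Freal u + (1 - t) * Freal v)"
    using F_eq_ereal_Freal[of u] F_eq_ereal_Freal[of v] assms by simp
  finally have le: "F (t * u + (1 - t) * v) \<le> ereal (t * Freal u + (1 - t) * Freal v)" .
  have "0 \<le> F (t * u + (1 - t) * v)" using assms by (simp add: F_nonneg)
  then have "real_of_ereal (F (t * u + (1 - t) * v))
      \<le> real_of_ereal (ereal (t * Freal u + (1 - t) * Freal v))"
    by (rule real_of_ereal_positive_mono[OF _ le]) simp
  then have "Freal (t * u + (1 - t) * v) \<le> t * Freal u + (1 - t) * Freal v"
    by (simp add: Freal_def)
  with le show ?thesis by auto
qed

lemma Freal_le_convex_comb:
  assumes x: "0 \<le> x" "x \<le> t * u + (1 - t) * v" and uv: "0 \<le> u" "0 \<le> v"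
    and t: "0 \<le> t" "t \<le> 1" and fin: "F u \<noteq> \<infinity>" "F v \<noteq> \<infinity>"
  shows "Freal x \<le> t * Freal u + (1 - t) * Freal v"
proof -
  have conv: "F (t * u + (1 - t) * v) \<noteq> \<infinity> \<and>
      Freal (t * u + (1 - t) * v) \<le> t * Freal u + (1 - t) * Freal v"
    by (rule Freal_convex) (use assms in auto)
  have "Freal x \<le> Freal (t * u + (1 - t) * v)" by (rule Freal_mono) (use x conv in auto)
  with conv show ?thesis by linarith
qed

lemma Freal_scale_le: "0 \<le> u \<Longrightarrow> 0 \<le> t \<Longrightarrow> t \<le> 1 \<Longrightarrow> F u \<noteq> \<infinity> \<Longrightarrow> Freal (t * u) \<le> t * Freal u"
  using Freal_convex[of u 0 t] by (simp add: F_zero Freal_def)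

end

locale ri_orlicz = ri_space X N + orlicz_fn F
  for X :: "(nat \<Rightarrow> real) set" and N :: "(nat \<Rightarrow> real) \<Rightarrow> real" and F :: "real \<Rightarrow> ereal"
begin

lemma F_in_mono:
  assumes le: "\<And>n. \<bar>v n\<bar> \<le> \<bar>w n\<bar>" and w: "F_in X F w"
  shows "F_in X F v \<and> N (Fcomp F v) \<le> N (Fcomp F w)"
proof -
  have fin: "F \<bar>w n\<bar> \<noteq> \<infinity>" for n using w by (simp add: F_in_def)
  have wx: "Fcomp F w \<in> X" using w by (simp add: F_in_def)
  have "\<bar>Fcomp F v n\<bar> \<le> \<bar>Fcomp F w n\<bar>" for n
    using Freal_mono[OF _ le fin] Fcomp_nonneg[of v n] Fcomp_nonneg[of w n] by (simp add: Fcomp_eq)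
  from ideal[OF wx this] have "Fcomp F v \<in> X \<and> N (Fcomp F v) \<le> N (Fcomp F w)" .
  moreover have "F \<bar>v n\<bar> \<noteq> \<infinity>" for n using F_finite_le[OF _ le fin] by simp
  ultimately show ?thesis by (simp add: F_in_def)
qed

lemma F_in_finite_support:
  assumes "\<And>n. F \<bar>v n\<bar> \<noteq> \<infinity>" and "\<And>n. L \<le> n \<Longrightarrow> v n = 0"
  shows "F_in X F v"
  using assms finite_support_mem[of L "Fcomp F v"] by (simp add: F_in_def Fcomp_eq Freal_def F_zero)

lemma F_in_convex_domination:
  assumes u: "F_in X F u" and v: "F_in X F v" and t: "0 \<le> t" "t \<le> 1"
    and dom: "\<And>n. L \<le> n \<Longrightarrow> \<bar>w n\<bar> \<le> t * \<bar>u n\<bar> + (1 - t) * \<bar>v n\<bar>"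
    and fin: "\<And>n. F \<bar>w n\<bar> \<noteq> \<infinity>"
  shows "F_in X F w"
proof -
  let ?comb = "\<lambda>n. t * Fcomp F u n + (1 - t) * Fcomp F v n"
  let ?head = "\<lambda>n. if n < L then Fcomp F w n else 0"
  have "?comb \<in> X"
    using u v by (intro add_mem scale_mem) (simp_all add: F_in_def)
  moreover have "?head \<in> X" by (rule finite_support_mem[of L]) simp
  ultimately have sum_mem: "(\<lambda>n. ?comb n + ?head n) \<in> X" by (rule add_mem)
  have "\<bar>Fcomp F w n\<bar> \<le> \<bar>?comb n + ?head n\<bar>" for n
  proof (cases "L \<le> n")
    case True
    have "Freal \<bar>w n\<bar> \<le> t * Freal \<bar>u n\<bar> + (1 - t) * Freal \<bar>v n\<bar>"
      by (rule Freal_le_convex_comb) (use True dom t u v in \<open>auto simp: F_in_def\<close>)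
    then show ?thesis using True Freal_nonneg[of "\<bar>w n\<bar>"] by (simp add: Fcomp_eq)
  next
    case False
    have "0 \<le> ?comb n" using t Fcomp_nonneg[of u n] Fcomp_nonneg[of v n] by simp
    then show ?thesis using False Fcomp_nonneg[of w n] by simp
  qed
  with ideal[OF sum_mem] fin show ?thesis by (simp add: F_in_def)
qed

lemma F_in_imp_CL_class:
  assumes v: "F_in X F v"
  shows "v \<in> CL_class X N F"
proof -
  define r where "r = max 1 (N (Fcomp F v))"
  have r: "1 \<le> r" "N (Fcomp F v) \<le> r" unfolding r_def by auto
  have vx: "Fcomp F v \<in> X" and fin: "\<And>n. F \<bar>v n\<bar> \<noteq> \<infinity>" using v unfolding F_in_def by auto
  have le: "\<bar>Fcomp F (\<lambda>n. v n / r) n\<bar> \<le> \<bar>(1 / r) * Fcomp F v n\<bar>" for n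
  proof -
    have "\<bar>v n / r\<bar> = (1 / r) * \<bar>v n\<bar>" using r by (simp add: abs_divide)
    moreover have "Freal ((1 / r) * \<bar>v n\<bar>) \<le> (1 / r) * Freal \<bar>v n\<bar>"
      by (rule Freal_scale_le) (use r fin in auto)
    ultimately show ?thesis using Freal_nonneg[of "\<bar>v n / r\<bar>"] Freal_nonneg[of "\<bar>v n\<bar>"] r
      by (simp add: Fcomp_eq)
  qed
  have scaled: "Fcomp F (\<lambda>n. v n / r) \<in> X \<and>
      N (Fcomp F (\<lambda>n. v n / r)) \<le> N (\<lambda>n. (1 / r) * Fcomp F v n)"
    by (rule ideal[OF scale_mem[OF vx] le])
  have "N (\<lambda>n. (1 / r) * Fcomp F v n) = (1 / r) * N (Fcomp F v)"
    using norm_scale[OF vx, of "1 / r"] r by simp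
  also have "\<dots> \<le> 1" using r norm_nonneg[OF vx] by (simp add: divide_le_eq)
  finally have norm_le: "N (Fcomp F (\<lambda>n. v n / r)) \<le> 1" using scaled by simp
  have "\<bar>v n / r\<bar> \<le> \<bar>v n\<bar>" for n
    using r by (simp add: abs_divide divide_le_eq mult_le_cancel_left1)
  then have "F \<bar>v n / r\<bar> \<noteq> \<infinity>" for n by (meson F_finite_le abs_ge_zero fin)
  then have "CL_admissible X N F v r"
    unfolding CL_admissible_def F_in_def using r scaled norm_le by auto
  then show ?thesis unfolding CL_class_def CL_space_def using v by blast
qed

end

locale cesaro_closed_non_delta2 = ri_orlicz X N F + ri_space_oc_fatou X N
  for X :: "(nat \<Rightarrow> real) set" and N :: "(nat \<Rightarrow> real) \<Rightarrow> real" and F :: "real \<Rightarrow> ereal" +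
  assumes cesaro_closed: "CL_class_closed_under_cesaro X N F"
    and F_pos: "\<forall>u>0. F u \<noteq> 0"
    and not_delta2: "\<not> delta2_zero F"
begin

lemma F_in_cesaro: "F_in X F v \<Longrightarrow> F_in X F (cesaro (\<lambda>n. \<bar>v n\<bar>))"
  using cesaro_closed F_in_imp_CL_class
  unfolding CL_class_closed_under_cesaro_def CL_class_def by blast

lemma F_in_eventual_limit:
  assumes nonneg: "\<And>M n. 0 \<le> v M n" and incr: "\<And>M n. v M n \<le> v (Suc M) n"
    and eventually_eq: "\<And>n. \<exists>K. \<forall>M\<ge>K. v M n = u n"
    and F_in: "\<And>M. F_in X F (v M)" and bound: "\<And>M. N (Fcomp F (v M)) \<le> B"
  shows "F_in X F u"
proof -
  have fin: "F \<bar>v M n\<bar> \<noteq> \<infinity>" for M n using F_in by (simp add: F_in_def)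
  have "Fcomp F u \<in> X \<and> (\<lambda>M. N (Fcomp F (v M))) \<longlonglongrightarrow> N (Fcomp F u)"
  proof (rule fatou[where B = B])
    show "Fcomp F (v M) n \<le> Fcomp F (v (Suc M)) n" for M n
      using Freal_mono[OF _ _ fin, of "\<bar>v M n\<bar>" "Suc M" n]
        nonneg[of M n] nonneg[of "Suc M" n] incr[of M n]
      by (simp add: Fcomp_eq)
    show "(\<lambda>M. Fcomp F (v M) n) \<longlonglongrightarrow> Fcomp F u n" for n
    proof -
      obtain K where "\<forall>M\<ge>K. v M n = u n" using eventually_eq by blast
      then show ?thesis by (intro LIMSEQ_eventually_eq[of K]) (simp add: Fcomp_def)
    qed
  qed (use Fcomp_nonneg F_in bound in \<open>auto simp: F_in_def\<close>)
  moreover have "F \<bar>u n\<bar> \<noteq> \<infinity>" for n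
  proof -
    obtain K where "\<forall>M\<ge>K. v M n = u n" using eventually_eq by blast
    then show ?thesis using fin[of K n] by simp
  qed
  ultimately show ?thesis by (simp add: F_in_def)
qed

lemma exists_finite_point: "\<exists>b>0. F b \<noteq> \<infinity>"
proof (rule ccontr)
  assume "\<not> ?thesis"
  then have infinite: "F u = \<infinity>" if "0 < u" for u using that by auto
  have "delta2_zero F"
    unfolding delta2_zero_def
  proof (intro exI[of _ "1::real"] conjI allI impI)
    fix u :: real
    assume u: "0 \<le> u \<and> u \<le> 1"
    show "F (2 * u) \<le> ereal 1 * F u"
      by (cases "u = 0") (use u infinite in \<open>auto simp: F_zero\<close>)
  qed (use infinite in auto)
  with not_delta2 show False ..
qed

definition finite_point :: real where
  "finite_point = (SOME b. 0 < b \<and> F b \<noteq> \<infinity>)"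

lemma finite_point_pos: "0 < finite_point" and F_finite_point: "F finite_point \<noteq> \<infinity>"
  using someI_ex[OF exists_finite_point] unfolding finite_point_def by auto

lemma F_finite_le_finite_point: "0 \<le> u \<Longrightarrow> u \<le> finite_point \<Longrightarrow> F u \<noteq> \<infinity>"
  using F_finite_le F_finite_point by blast

lemma Freal_pos: "0 < u \<Longrightarrow> F u \<noteq> \<infinity> \<Longrightarrow> 0 < Freal u"
  using F_pos F_eq_ereal_Freal[of u] Freal_nonneg[of u] by (fastforce simp: zero_ereal_def)

definition jump_factor :: "nat \<Rightarrow> real" where
  "jump_factor k = real (k + 1) * 2 ^ (k + 3)"

text \<open>The bound on \<open>Freal u * fundamental 1\<close> lets the block lengths below be tuned
  within a factor \<open>2\<close>: one more point at level \<open>u\<close> adds at most \<open>(1/2)^(k+3)\<close> to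
  the norm of the block.\<close>
definition jump_point :: "nat \<Rightarrow> real \<Rightarrow> real \<Rightarrow> bool" where
  "jump_point k p u \<longleftrightarrow> 0 < u \<and> u \<le> p \<and> u \<le> finite_point / 8 \<and>
     Freal u * fundamental 1 \<le> (1/2) ^ (k + 3) \<and> \<not> F (2 * u) \<le> ereal (jump_factor k) * F u"

lemma exists_jump_point:
  assumes p: "0 < p"
  shows "\<exists>u. jump_point k p u"
proof -
  define c where "c = (1/2::real) ^ (k + 3)"
  define D where "D = Freal finite_point * fundamental 1 + 1"
  have D: "1 \<le> D" "Freal finite_point * fundamental 1 \<le> D"
    unfolding D_def using Freal_nonneg[of finite_point] finite_point_pos
      fundamental_nonneg[of 1] by simp_all
  define u0 where "u0 = min p (min (finite_point / 8) (finite_point * c / D))"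
  have u0: "0 < u0" unfolding u0_def c_def using p finite_point_pos D by simp
  then have "0 < F u0" using F_pos F_nonneg[of u0] by (simp add: order_less_le)
  moreover have "0 < jump_factor k" unfolding jump_factor_def by simp
  ultimately obtain u where u: "0 \<le> u" "u \<le> u0" "\<not> F (2 * u) \<le> ereal (jump_factor k) * F u"
    using not_delta2 u0 unfolding delta2_zero_def by blast
  have u_pos: "0 < u" using u by (cases "u = 0") (auto simp: F_zero)
  have u_fp: "u \<le> finite_point" using u(2) finite_point_pos unfolding u0_def by simp
  have "Freal u \<le> (u / finite_point) * Freal finite_point"
    using Freal_scale_le[of finite_point "u / finite_point"] F_finite_point
      u_pos u_fp finite_point_pos
    by simp
  then have "Freal u * fundamental 1 \<le> (u / finite_point) * Freal finite_point * fundamental 1"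
    by (rule mult_right_mono[OF _ fundamental_nonneg])
  also have "\<dots> = (u / finite_point) * (Freal finite_point * fundamental 1)" by simp
  also have "\<dots> \<le> (u / finite_point) * D"
    using D u_pos finite_point_pos by (intro mult_left_mono) auto
  also have "\<dots> \<le> c"
  proof -
    have "u * D \<le> finite_point * c"
      using u(2) D unfolding u0_def by (simp add: pos_le_divide_eq)
    then show ?thesis using finite_point_pos
      by (simp add: divide_le_eq mult.commute mult.left_commute)
  qed
  finally have "Freal u * fundamental 1 \<le> c" .
  moreover have "u \<le> p" "u \<le> finite_point / 8" using u(2) unfolding u0_def by simp_all
  ultimately show ?thesis unfolding jump_point_def c_def using u(3) u_pos by blast
qed

primrec level :: "nat \<Rightarrow> real" where
  "level 0 = (SOME u. jump_point 0 (finite_point / 8) u)"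
| "level (Suc k) = (SOME u. jump_point (Suc k) (level k) u)"

lemma level_jump_point: "jump_point k (if k = 0 then finite_point / 8 else level (k - 1)) (level k)"
proof (induction k)
  case 0
  have "0 < finite_point / 8" using finite_point_pos by simp
  from someI_ex[OF exists_jump_point[OF this]] show ?case by simp
next
  case (Suc k)
  then have "0 < level k" unfolding jump_point_def by simp
  from someI_ex[OF exists_jump_point[OF this]] show ?case by simp
qed

lemma level_pos: "0 < level k"
  and level_le: "level k \<le> finite_point / 8"
  and level_small: "Freal (level k) * fundamental 1 \<le> (1/2) ^ (k + 3)"
  and level_jump: "\<not> F (2 * level k) \<le> ereal (jump_factor k) * F (level k)"
  using level_jump_point[of k] unfolding jump_point_def by auto

lemma level_antimono: "k \<le> k' \<Longrightarrow> level k' \<le> level k"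
proof (induction k' rule: dec_induct)
  case (step n)
  then show ?case using level_jump_point[of "Suc n"] unfolding jump_point_def by simp
qed simp

lemma F_level_finite: "F (level k) \<noteq> \<infinity>"
  using F_finite_le_finite_point level_pos[of k] level_le[of k] finite_point_pos by simp

lemma Freal_level_pos: "0 < Freal (level k)"
  by (rule Freal_pos[OF level_pos F_level_finite])

definition block_len :: "nat \<Rightarrow> nat" where
  "block_len k = (LEAST m. (1/2) ^ (k + 3) < Freal (level k) * fundamental m)"

lemma block_len_lower: "(1/2) ^ (k + 3) < Freal (level k) * fundamental (block_len k)"
proof -
  obtain m where "(1/2) ^ (k + 3) / Freal (level k) < fundamental m"
    using fundamental_unbounded by blast
  then have "\<exists>m. (1/2) ^ (k + 3) < Freal (level k) * fundamental m"
    using Freal_level_pos[of k] by (auto simp: pos_divide_less_eq mult.commute)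
  then show ?thesis unfolding block_len_def by (rule LeastI_ex)
qed

lemma block_len_upper: "1 \<le> block_len k
    \<and> Freal (level k) * fundamental (block_len k) \<le> (1/2) ^ (k + 2)"
proof -
  have "block_len k \<noteq> 0" using block_len_lower[of k] fundamental_0 by (cases "block_len k") auto
  then obtain m where m: "block_len k = Suc m" using not0_implies_Suc by blast
  then have "m < block_len k" by simp
  then have "\<not> (1/2) ^ (k + 3) < Freal (level k) * fundamental m"
    unfolding block_len_def by (rule not_less_Least)
  then have "Freal (level k) * fundamental (block_len k) \<le> (1/2) ^ (k + 3) + (1/2) ^ (k + 3)"
    using mult_left_mono[OF fundamental_Suc_le[of m], of "Freal (level k)"] Freal_level_pos[of k]
      level_small[of k] m by (simp add: algebra_simps)
  also have "\<dots> = (1/2) ^ (k + 2)" by (simp add: power_add power_one_over)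
  finally show ?thesis using m by simp
qed

primrec block_start :: "nat \<Rightarrow> nat" where
  "block_start 0 = 0"
| "block_start (Suc k) = block_start k + block_len k"

lemma strict_mono_block_start: "strict_mono block_start"
  unfolding strict_mono_Suc_iff using block_len_upper by (simp add: Suc_le_eq)

definition step :: "nat \<Rightarrow> real" where
  "step n = level (block_index block_start n)"

lemma step_pos: "0 < step n" and step_le: "step n \<le> finite_point / 8"
  unfolding step_def using level_pos level_le by auto

lemma step_antimono: "n \<le> n' \<Longrightarrow> step n' \<le> step n"
  unfolding step_def
  by (rule level_antimono[OF block_index_mono[OF strict_mono_block_start]]) auto

lemma step_eq_level: "block_start k \<le> n \<Longrightarrow> n < block_start (Suc k) \<Longrightarrow> step n = level k"
  unfolding step_def using block_index_eqI[OF strict_mono_block_start] by simp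

lemma F_in_step: "F_in X F step"
proof -
  have block: "(\<lambda>n. if block_start K \<le> n \<and> n < block_start (Suc K) then Fcomp F step n else 0) =
      (\<lambda>n. Freal (level K) * interval_ind (block_start K) (block_len K) n)" for K
    using step_eq_level[of K] level_pos[of K] by (auto simp: fun_eq_iff interval_ind_def Fcomp_eq)
  have "N (\<lambda>n. if block_start K \<le> n \<and> n < block_start (Suc K) then Fcomp F step n else 0)
      \<le> (1/2) ^ Suc K" for K
  proof -
    have "N (\<lambda>n. Freal (level K) * interval_ind (block_start K) (block_len K) n)
        = Freal (level K) * fundamental (block_len K)"
      using norm_scaled_interval_ind Freal_level_pos[of K] by simp
    also have "\<dots> \<le> (1/2) ^ (K + 2)" using block_len_upper by blast
    also have "\<dots> \<le> (1/2) ^ Suc K" by (simp add: power_decreasing)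
    finally show ?thesis unfolding block .
  qed
  from blockwise_fatou[OF strict_mono_block_start Fcomp_nonneg this]
  have "Fcomp F step \<in> X" by (simp add: tail_def)
  moreover have "F \<bar>step n\<bar> \<noteq> \<infinity>" for n
    using F_finite_le_finite_point step_pos[of n] step_le[of n] finite_point_pos by simp
  ultimately show ?thesis by (simp add: F_in_def)
qed

lemma norm_Fcomp_double_step_gt:
  assumes double: "F_in X F (\<lambda>n. 2 * step n)"
  shows "real (k + 1) < N (Fcomp F (\<lambda>n. 2 * step n))"
proof -
  let ?G = "Fcomp F (\<lambda>n. 2 * step n)"
  have "block_start k < block_start (Suc k)" by (rule strict_monoD[OF strict_mono_block_start]) simp
  then have "step (block_start k) = level k" using step_eq_level by simp
  then have "F (2 * level k) \<noteq> \<infinity>"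
    using double level_pos[of k] unfolding F_in_def
    by (metis abs_of_pos mult_pos_pos zero_less_numeral)
  then have jump: "jump_factor k * Freal (level k) < Freal (2 * level k)"
    using level_jump[of k] F_eq_ereal_Freal[of "2 * level k"] F_eq_ereal_Freal[of "level k"]
      level_pos[of k] F_level_finite[of k] by simp
  have le: "\<bar>Freal (2 * level k) * interval_ind (block_start k) (block_len k) n\<bar> \<le> \<bar>?G n\<bar>" for n
    using step_eq_level[of k n] level_pos[of k] Freal_nonneg[of "2 * level k"] Fcomp_nonneg[of _ n]
    by (auto simp: interval_ind_def Fcomp_eq)
  have "?G \<in> X" using double by (simp add: F_in_def)
  from conjunct2[OF ideal[OF this le]] have "Freal (2 * level k) * fundamental (block_len k) \<le> N ?G"
    using norm_scaled_interval_ind Freal_nonneg[of "2 * level k"] level_pos[of k] by simp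
  moreover have "real (k + 1) < Freal (2 * level k) * fundamental (block_len k)"
  proof -
    have "real (k + 1) = jump_factor k * (1/2) ^ (k + 3)"
      unfolding jump_factor_def by (simp add: power_one_over)
    also have "\<dots> < jump_factor k * (Freal (level k) * fundamental (block_len k))"
      using block_len_lower[of k] by (intro mult_strict_left_mono) (simp_all add: jump_factor_def)
    also have "\<dots> \<le> Freal (2 * level k) * fundamental (block_len k)"
      using mult_right_mono[OF less_imp_le[OF jump] fundamental_nonneg[of "block_len k"]]
      by (simp add: mult.assoc)
    finally show ?thesis .
  qed
  ultimately show ?thesis by simp
qed

lemma not_F_in_double_step: "\<not> F_in X F (\<lambda>n. 2 * step n)"
proof
  assume double: "F_in X F (\<lambda>n. 2 * step n)"
  obtain k :: nat where "N (Fcomp F (\<lambda>n. 2 * step n)) \<le> real k" using real_arch_simple by blast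
  with norm_Fcomp_double_step_gt[OF double, of k] show False by simp
qed

definition avg :: "nat \<Rightarrow> real" where
  "avg = cesaro step"

lemma step_le_avg: "step n \<le> avg n"
  unfolding avg_def by (rule cesaro_ge_const) (rule step_antimono)

lemma avg_nonneg: "0 \<le> avg n"
  using step_le_avg[of n] step_pos[of n] by simp

lemma avg_div_le_finite_point:
  assumes "1/4 \<le> l"
  shows "avg n / l \<le> finite_point"
proof -
  have "avg n \<le> finite_point / 8" unfolding avg_def by (rule cesaro_le_const) (rule step_le)
  also have "\<dots> \<le> finite_point * l" using assms finite_point_pos by simp
  finally show ?thesis using assms by (simp add: pos_divide_le_eq)
qed

lemma F_avg_div_finite: "1/4 \<le> l \<Longrightarrow> 0 \<le> x \<Longrightarrow> x \<le> avg n / l \<Longrightarrow> F x \<noteq> \<infinity>"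
  by (meson F_finite_le_finite_point avg_div_le_finite_point order_trans)

lemma F_in_avg_div_mono:
  assumes l: "0 < l" "l \<le> l'" and F_in: "F_in X F (\<lambda>n. avg n / l)"
  shows "F_in X F (\<lambda>n. avg n / l')"
proof -
  have "\<bar>avg n / l'\<bar> \<le> \<bar>avg n / l\<bar>" for n
    using l avg_nonneg[of n] by (simp add: divide_left_mono)
  from F_in_mono[OF this F_in] show ?thesis ..
qed

definition scales :: "real set" where
  "scales = {l. 0 < l \<and> F_in X F (\<lambda>n. avg n / l)}"

definition crit :: real where
  "crit = Inf scales"

lemma one_mem_scales: "1 \<in> scales"
proof -
  have "(\<lambda>n. \<bar>step n\<bar>) = step" using step_pos by (simp add: fun_eq_iff less_imp_le)
  then show ?thesis
    using F_in_cesaro[OF F_in_step] unfolding scales_def avg_def by simp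
qed

lemma scales_gt_half: "l \<in> scales \<Longrightarrow> 1/2 < l"
proof (rule ccontr)
  assume l: "l \<in> scales" "\<not> 1/2 < l"
  then have half: "F_in X F (\<lambda>n. avg n / (1/2))"
    using F_in_avg_div_mono[of l "1/2"] unfolding scales_def by auto
  have "\<bar>2 * step n\<bar> \<le> \<bar>avg n / (1/2)\<bar>" for n
    using step_le_avg[of n] step_pos[of n] by simp
  from F_in_mono[OF this half] not_F_in_double_step show False by blast
qed

lemma bdd_below_scales: "bdd_below scales"
  unfolding bdd_below_def using scales_gt_half by (meson less_imp_le)

lemma crit_ge_half: "1/2 \<le> crit"
  unfolding crit_def
proof (rule cInf_greatest)
  show "scales \<noteq> {}" using one_mem_scales by blast
  show "1/2 \<le> l" if "l \<in> scales" for l using scales_gt_half[OF that] by simp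
qed

lemma F_in_above_crit: "crit < l \<Longrightarrow> F_in X F (\<lambda>n. avg n / l)"
proof -
  assume "crit < l"
  then obtain l' where "l' \<in> scales" "l' < l"
    using cInf_lessD[of scales l] one_mem_scales unfolding crit_def by blast
  then show ?thesis using F_in_avg_div_mono[of l' l] unfolding scales_def by auto
qed

lemma not_F_in_below_crit:
  assumes "0 < l" "l < crit"
  shows "\<not> F_in X F (\<lambda>n. avg n / l)"
proof
  assume "F_in X F (\<lambda>n. avg n / l)"
  with assms(1) have "l \<in> scales" unfolding scales_def by simp
  then have "crit \<le> l" unfolding crit_def by (rule cInf_lower[OF _ bdd_below_scales])
  with assms(2) show False by simp
qed

lemma F_in_harmonic_tail:
  assumes c: "0 \<le> c"
  shows "F_in X F (tail (nat \<lceil>c / finite_point\<rceil>) (\<lambda>n. c / real (Suc n)))"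
proof -
  define L where "L = nat \<lceil>c / finite_point\<rceil>"
  have "c / finite_point \<le> real L" unfolding L_def by linarith
  then have c_le: "c \<le> finite_point * real L"
    using finite_point_pos by (simp add: divide_le_eq mult.commute)
  define g where "g n = (if n < L then finite_point else 0)" for n
  have "F_in X F g"
    by (rule F_in_finite_support[of g L])
      (auto simp: g_def F_zero F_finite_point finite_point_pos abs_of_pos)
  moreover have "(\<lambda>n. \<bar>g n\<bar>) = g" using finite_point_pos by (simp add: g_def fun_eq_iff)
  ultimately have cg: "F_in X F (cesaro g)" using F_in_cesaro[of g] by simp
  have "\<bar>tail L (\<lambda>n. c / real (Suc n)) n\<bar> \<le> \<bar>cesaro g n\<bar>" for n
  proof (cases "L \<le> n")
    case True
    then have "cesaro g n = finite_point * real L / real (Suc n)"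
      unfolding g_def cesaro_prefix_indicator by (simp add: min_def)
    then show ?thesis using True c c_le finite_point_pos by (simp add: tail_def divide_right_mono)
  qed (simp add: tail_def)
  from F_in_mono[OF this cg] show ?thesis unfolding L_def by blast
qed

lemma avg_div_le_convex_comb:
  assumes \<mu>: "0 < \<mu>" "\<mu> < l"
  shows "avg n / l \<le> \<mu> / l * (cesaro (tail M step) n / \<mu>) +
    (1 - \<mu> / l) * ((\<Sum>i<M. step i) / (l - \<mu>) / real (Suc n))"
proof -
  have "avg n \<le> cesaro (tail M step) n + (\<Sum>i<M. step i) / real (Suc n)"
    unfolding avg_def by (rule cesaro_le_cesaro_tail) (simp add: less_imp_le[OF step_pos])
  then have "avg n / l \<le> (cesaro (tail M step) n + (\<Sum>i<M. step i) / real (Suc n)) / l"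
    by (rule divide_right_mono) (use \<mu> in simp)
  also have "\<dots> = \<mu> / l * (cesaro (tail M step) n / \<mu>) +
      (1 - \<mu> / l) * ((\<Sum>i<M. step i) / (l - \<mu>) / real (Suc n))"
  proof -
    have "1 - \<mu> / l = (l - \<mu>) / l" using \<mu> by (simp add: field_simps)
    then show ?thesis using \<mu> by (simp add: add_divide_distrib)
  qed
  finally show ?thesis .
qed

text \<open>The harmonic error term of \<open>avg_div_le_convex_comb\<close> stays in the class by
  closedness under \<open>C\<close>, so convexity would put \<open>avg / l\<close> into it for some
  \<open>l\<close> strictly between \<open>\<mu>\<close> and \<open>crit\<close>.\<close>
lemma not_F_in_cesaro_tail:
  assumes \<mu>: "0 < \<mu>" "\<mu> < crit"
  shows "\<not> F_in X F (\<lambda>n. cesaro (tail M step) n / \<mu>)"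
proof
  assume A: "F_in X F (\<lambda>n. cesaro (tail M step) n / \<mu>)"
  define l where "l = (\<mu> + crit) / 2"
  have l: "\<mu> < l" "l < crit" "1/4 \<le> l" using \<mu> crit_ge_half unfolding l_def by auto
  have m: "0 \<le> (\<Sum>i<M. step i)" by (rule sum_nonneg) (simp add: less_imp_le[OF step_pos])
  define c where "c = (\<Sum>i<M. step i) / (l - \<mu>)"
  have c: "0 \<le> c" unfolding c_def using m l by simp
  let ?L = "nat \<lceil>c / finite_point\<rceil>"
  have "F_in X F (\<lambda>n. avg n / l)"
  proof (rule F_in_convex_domination[OF A F_in_harmonic_tail[OF c]])
    show "0 \<le> \<mu> / l" "\<mu> / l \<le> 1" using \<mu> l by auto
    show "F \<bar>avg n / l\<bar> \<noteq> \<infinity>" for n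
    proof -
      have nonneg: "0 \<le> avg n / l" using avg_nonneg[of n] l by simp
      show ?thesis
        unfolding abs_of_nonneg[OF nonneg] by (rule F_avg_div_finite[OF l(3) nonneg order_refl])
    qed
    fix n
    assume "?L \<le> n"
    moreover have "0 \<le> cesaro (tail M step) n"
      by (rule cesaro_nonneg) (simp add: tail_def less_imp_le[OF step_pos])
    ultimately show "\<bar>avg n / l\<bar> \<le> \<mu> / l * \<bar>cesaro (tail M step) n / \<mu>\<bar> +
        (1 - \<mu> / l) * \<bar>tail ?L (\<lambda>n. c / real (Suc n)) n\<bar>"
      using avg_div_le_convex_comb[OF \<mu>(1) l(1), of n M] avg_nonneg[of n] \<mu> l c m
      by (simp add: tail_def c_def)
  qed
  with not_F_in_below_crit l \<mu> show False by simp
qed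

definition eps :: "nat \<Rightarrow> real" where
  "eps k = 1 / (real k + 2)"

definition scale_hi :: "nat \<Rightarrow> real" where
  "scale_hi k = crit * (1 + eps k)"

definition scale_lo :: "nat \<Rightarrow> real" where
  "scale_lo k = crit * (1 - eps k)"

lemma eps_pos: "0 < eps k" and eps_le_half: "eps k \<le> 1/2"
  unfolding eps_def by auto

lemma scale_hi_gt_crit: "crit < scale_hi k"
  unfolding scale_hi_def using eps_pos[of k] crit_ge_half by simp

lemma scale_hi_ge: "1/4 \<le> scale_hi k"
  using scale_hi_gt_crit[of k] crit_ge_half by simp

lemma scale_hi_pos: "0 < scale_hi k"
  using scale_hi_ge[of k] by simp

lemma scale_hi_antimono: "k \<le> k' \<Longrightarrow> scale_hi k' \<le> scale_hi k"
  unfolding scale_hi_def eps_def using crit_ge_half by (simp add: divide_left_mono)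

lemma scale_lo_less_crit: "scale_lo k < crit"
  unfolding scale_lo_def using eps_pos[of k] crit_ge_half by simp

lemma scale_lo_ge: "1/4 \<le> scale_lo k"
proof -
  have "(1/2) * (1/2) \<le> crit * (1 - eps k)"
    using eps_le_half[of k] crit_ge_half by (intro mult_mono) auto
  then show ?thesis unfolding scale_lo_def by simp
qed

lemma scale_lo_pos: "0 < scale_lo k"
  using scale_lo_ge[of k] by simp

definition F_avg :: "nat \<Rightarrow> nat \<Rightarrow> real" where
  "F_avg k = Fcomp F (\<lambda>n. avg n / scale_hi k)"

lemma F_avg_mem: "F_avg k \<in> X"
  using F_in_above_crit[OF scale_hi_gt_crit] unfolding F_avg_def F_in_def by blast

lemma exists_small_tail: "\<exists>M. N (tail M (F_avg k)) < (1/2) ^ Suc k"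
proof -
  have "(\<lambda>M. N (tail M (F_avg k))) \<longlonglongrightarrow> 0"
    by (rule tail_norm_tendsto_zero[OF F_avg_mem]) (simp add: F_avg_def Fcomp_nonneg)
  from order_tendstoD(2)[OF this, of "(1/2) ^ Suc k"] show ?thesis
    by (auto simp: eventually_sequentially)
qed

definition small_tail_start :: "nat \<Rightarrow> nat" where
  "small_tail_start k = (SOME M. N (tail M (F_avg k)) < (1/2) ^ Suc k)"

lemma norm_tail_F_avg_le:
  assumes M: "small_tail_start k \<le> M"
  shows "N (tail M (F_avg k)) \<le> (1/2) ^ Suc k"
proof -
  let ?M0 = "small_tail_start k"
  have small: "N (tail ?M0 (F_avg k)) < (1/2) ^ Suc k"
    unfolding small_tail_start_def by (rule someI_ex[OF exists_small_tail])
  have "tail ?M0 (F_avg k) \<in> X" using tail_mem[OF F_avg_mem] by blast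
  then have "N (tail M (F_avg k)) \<le> N (tail ?M0 (F_avg k))"
    by (rule conjunct2[OF ideal]) (use M in \<open>auto simp: tail_def F_avg_def Fcomp_nonneg\<close>)
  with small show ?thesis by simp
qed

definition step_block :: "nat \<Rightarrow> nat \<Rightarrow> nat \<Rightarrow> real" where
  "step_block m M = (\<lambda>i. if m \<le> i \<and> i < M then step i else 0)"

lemma step_block_nonneg: "0 \<le> step_block m M i"
  unfolding step_block_def using step_pos[of i] by simp

lemma cesaro_step_block_mono: "M \<le> M' \<Longrightarrow> cesaro (step_block m M) n \<le> cesaro (step_block m M') n"
  by (rule cesaro_mono) (auto simp: step_block_def less_imp_le[OF step_pos])

definition block_bounded :: "nat \<Rightarrow> nat \<Rightarrow> nat \<Rightarrow> bool" where
  "block_bounded k m M \<longleftrightarrow> F_in X F (\<lambda>n. cesaro (step_block m M) n / scale_lo k) \<and>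
     N (Fcomp F (\<lambda>n. cesaro (step_block m M) n / scale_lo k)) < real k"

lemma block_bounded_antimono:
  assumes M: "M \<le> M'" and bounded: "block_bounded k m M'"
  shows "block_bounded k m M"
proof -
  have "\<bar>cesaro (step_block m M) n / scale_lo k\<bar> \<le> \<bar>cesaro (step_block m M') n / scale_lo k\<bar>" for n
    using cesaro_step_block_mono[OF M, of m n]
      cesaro_nonneg[of "step_block m M", OF step_block_nonneg]
      scale_lo_pos[of k] by (simp add: divide_right_mono)
  moreover have "F_in X F (\<lambda>n. cesaro (step_block m M') n / scale_lo k)"
    using bounded unfolding block_bounded_def by blast
  ultimately have "F_in X F (\<lambda>n. cesaro (step_block m M) n / scale_lo k) \<and>
      N (Fcomp F (\<lambda>n. cesaro (step_block m M) n / scale_lo k))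
        \<le> N (Fcomp F (\<lambda>n. cesaro (step_block m M') n / scale_lo k))"
    by (rule F_in_mono)
  with bounded show ?thesis unfolding block_bounded_def by linarith
qed

text \<open>Otherwise the Fatou property would put the whole tail starting at \<open>m\<close> into the
  class at the scale \<open>scale_lo k < crit\<close>.\<close>
lemma exists_unbounded_block: "\<exists>M. \<not> block_bounded k m M"
proof (rule ccontr)
  assume "\<not> ?thesis"
  then have bounded: "block_bounded k m M" for M by blast
  have "F_in X F (\<lambda>n. cesaro (tail m step) n / scale_lo k)"
  proof (rule F_in_eventual_limit[where v = "\<lambda>M n. cesaro (step_block m M) n / scale_lo k"
        and B = "real k"])
    show "0 \<le> cesaro (step_block m M) n / scale_lo k" for M n
      using cesaro_nonneg[OF step_block_nonneg] scale_lo_pos[of k] by simp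
    show "cesaro (step_block m M) n / scale_lo k
        \<le> cesaro (step_block m (Suc M)) n / scale_lo k" for M n
      using cesaro_step_block_mono[of M "Suc M" m n] scale_lo_pos[of k]
      by (simp add: divide_right_mono)
    show "\<exists>K. \<forall>M\<ge>K. cesaro (step_block m M) n / scale_lo k
        = cesaro (tail m step) n / scale_lo k" for n
      by (rule exI[of _ "Suc n"]) (auto intro!: cesaro_cong simp: step_block_def tail_def)
    show "F_in X F (\<lambda>n. cesaro (step_block m M) n / scale_lo k)" for M
      using bounded[of M] unfolding block_bounded_def by blast
    show "N (Fcomp F (\<lambda>n. cesaro (step_block m M) n / scale_lo k)) \<le> real k" for M
      using bounded[of M] unfolding block_bounded_def by simp
  qed
  then show False using not_F_in_cesaro_tail[OF scale_lo_pos scale_lo_less_crit] by blast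
qed

definition unbounded_block_end :: "nat \<Rightarrow> nat \<Rightarrow> nat" where
  "unbounded_block_end k m = (SOME M. \<not> block_bounded k m M)"

lemma not_block_bounded: "unbounded_block_end k m \<le> M \<Longrightarrow> \<not> block_bounded k m M"
  using someI_ex[OF exists_unbounded_block] block_bounded_antimono
  unfolding unbounded_block_end_def by blast

primrec cut_point :: "nat \<Rightarrow> nat" where
  "cut_point 0 = small_tail_start 0"
| "cut_point (Suc k) =
     max (Suc (cut_point k)) (max (small_tail_start (Suc k)) (unbounded_block_end k (cut_point k)))"

declare cut_point.simps(2) [simp del]

lemma strict_mono_cut_point: "strict_mono cut_point"
  unfolding strict_mono_Suc_iff by (simp add: cut_point.simps less_max_iff_disj)

lemma cut_point_small_tail: "N (tail (cut_point k) (F_avg k)) \<le> (1/2) ^ Suc k"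
  by (rule norm_tail_F_avg_le) (cases k, auto simp: cut_point.simps)

lemma cut_point_not_block_bounded: "\<not> block_bounded k (cut_point k) (cut_point (Suc k))"
  by (rule not_block_bounded) (simp add: cut_point.simps)

definition base :: "nat \<Rightarrow> real" where
  "base = tail (cut_point 0) (\<lambda>n. step n / scale_hi (block_index cut_point n))"

lemma base_nonneg: "0 \<le> base n"
  unfolding base_def tail_def using step_pos[of n] scale_hi_pos by (simp add: less_imp_le)

lemma cesaro_base_le:
  assumes n: "cut_point 0 \<le> n"
  shows "cesaro base n \<le> avg n / scale_hi (block_index cut_point n)"
proof -
  let ?s = "scale_hi (block_index cut_point n)"
  have "cesaro base n \<le> cesaro (\<lambda>i. (1 / ?s) * step i) n"
  proof (rule cesaro_mono)
    fix i
    assume "i \<le> n"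
    then have "cut_point 0 \<le> i \<Longrightarrow> ?s \<le> scale_hi (block_index cut_point i)"
      by (intro scale_hi_antimono block_index_mono[OF strict_mono_cut_point])
    then show "base i \<le> (1 / ?s) * step i"
      using step_pos[of i] scale_hi_ge[of "block_index cut_point n"]
      by (auto simp: base_def tail_def divide_left_mono)
  qed
  then show ?thesis unfolding cesaro_cmult avg_def by simp
qed

lemma cesaro_base_zero: "n < cut_point 0 \<Longrightarrow> cesaro base n = 0"
  using cesaro_cong[of n base "\<lambda>i. 0"] cesaro_const[of 0 n] by (simp add: base_def tail_def)

lemma majorant_mem:
  "tail (cut_point 0) (\<lambda>n. F_avg (block_index cut_point n) n) \<in> X \<and>
   N (tail (cut_point 0) (\<lambda>n. F_avg (block_index cut_point n) n)) \<le> 1"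
proof (rule blockwise_fatou[OF strict_mono_cut_point])
  show "0 \<le> F_avg (block_index cut_point n) n" for n by (simp add: F_avg_def Fcomp_nonneg)
  fix K
  let ?piece = "\<lambda>n. if cut_point K \<le> n \<and> n < cut_point (Suc K)
    then F_avg (block_index cut_point n) n else 0"
  have "tail (cut_point K) (F_avg K) \<in> X" using tail_mem[OF F_avg_mem] by blast
  moreover have "\<bar>?piece n\<bar> \<le> \<bar>tail (cut_point K) (F_avg K) n\<bar>" for n
    using block_index_eqI[OF strict_mono_cut_point, of K n]
    by (auto simp: tail_def F_avg_def Fcomp_nonneg)
  ultimately have "N ?piece \<le> N (tail (cut_point K) (F_avg K))" by (rule conjunct2[OF ideal])
  also have "\<dots> \<le> (1/2) ^ Suc K" by (rule cut_point_small_tail)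
  finally show "N ?piece \<le> (1/2) ^ Suc K" .
qed

lemma F_in_cesaro_base: "F_in X F (cesaro base) \<and> N (Fcomp F (cesaro base)) \<le> 1"
proof -
  let ?G = "tail (cut_point 0) (\<lambda>n. F_avg (block_index cut_point n) n)"
  have nonneg: "0 \<le> cesaro base n" for n by (rule cesaro_nonneg[OF base_nonneg])
  have bound: "cesaro base n \<le> finite_point \<and> \<bar>Fcomp F (cesaro base) n\<bar> \<le> \<bar>?G n\<bar>" for n
  proof (cases "cut_point 0 \<le> n")
    case False
    then show ?thesis
      using cesaro_base_zero[of n] finite_point_pos
      by (simp add: Fcomp_eq Freal_def F_zero tail_def)
  next
    case True
    let ?s = "scale_hi (block_index cut_point n)"
    have le: "cesaro base n \<le> avg n / ?s" by (rule cesaro_base_le[OF True])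
    have avg_s: "0 \<le> avg n / ?s"
      by (intro divide_nonneg_nonneg avg_nonneg less_imp_le[OF scale_hi_pos])
    have "Freal (cesaro base n) \<le> Freal (avg n / ?s)"
      by (rule Freal_mono[OF nonneg le F_avg_div_finite[OF scale_hi_ge avg_s order_refl]])
    moreover have "avg n / ?s \<le> finite_point" by (rule avg_div_le_finite_point[OF scale_hi_ge])
    ultimately show ?thesis
      using True le nonneg[of n] Freal_nonneg[of "cesaro base n"] Freal_nonneg[OF avg_s]
        avg_nonneg[of n] scale_hi_pos[of "block_index cut_point n"]
      by (simp add: Fcomp_eq tail_def F_avg_def)
  qed
  have "?G \<in> X" using majorant_mem by blast
  from ideal[OF this] bound have "Fcomp F (cesaro base) \<in> X \<and> N (Fcomp F (cesaro base)) \<le> N ?G"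
    by blast
  moreover have "F \<bar>cesaro base n\<bar> \<noteq> \<infinity>" for n
    using F_finite_le_finite_point nonneg[of n] bound[of n] by simp
  ultimately show ?thesis using majorant_mem by (auto simp: F_in_def)
qed

definition embed :: "(nat \<Rightarrow> real) \<Rightarrow> nat \<Rightarrow> real" where
  "embed a n = a (fst (prod_decode (block_index cut_point n))) * base n"

lemma embed_admissible:
  assumes a: "a \<in> linf" and r: "0 < r" "linf_norm a \<le> r"
  shows "CL_admissible X N F (cesaro (\<lambda>n. \<bar>embed a n\<bar>)) r"
proof -
  have le: "\<bar>cesaro (\<lambda>n. \<bar>embed a n\<bar>) n / r\<bar> \<le> \<bar>cesaro base n\<bar>" for n
  proof -
    have "cesaro (\<lambda>n. \<bar>embed a n\<bar>) n \<le> cesaro (\<lambda>i. r * base i) n"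
    proof (rule cesaro_mono)
      fix i
      have "\<bar>embed a i\<bar> = \<bar>a (fst (prod_decode (block_index cut_point i)))\<bar> * base i"
        unfolding embed_def using base_nonneg[of i] by (simp add: abs_mult)
      also have "\<dots> \<le> r * base i"
        using linf_abs_le_norm[OF a] r(2) base_nonneg[of i]
        by (intro mult_right_mono) (auto intro: order_trans)
      finally show "\<bar>embed a i\<bar> \<le> r * base i" .
    qed
    then have "cesaro (\<lambda>n. \<bar>embed a n\<bar>) n / r \<le> cesaro base n"
      using r(1) by (simp add: cesaro_cmult pos_divide_le_eq mult.commute)
    moreover have "0 \<le> cesaro (\<lambda>n. \<bar>embed a n\<bar>) n" by (rule cesaro_nonneg) simp
    ultimately show ?thesis using r(1) cesaro_nonneg[of base n, OF base_nonneg] by simp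
  qed
  have "F_in X F (\<lambda>n. cesaro (\<lambda>n. \<bar>embed a n\<bar>) n / r) \<and>
      N (Fcomp F (\<lambda>n. cesaro (\<lambda>n. \<bar>embed a n\<bar>) n / r)) \<le> N (Fcomp F (cesaro base))"
    by (rule F_in_mono[OF le]) (use F_in_cesaro_base in blast)
  with F_in_cesaro_base r(1) show ?thesis unfolding CL_admissible_def by auto
qed

lemma exists_block_of_coordinate:
  assumes \<rho>: "0 < \<rho>" "\<rho> < 1"
  shows "\<exists>k. fst (prod_decode k) = j \<and> 2 \<le> k \<and> \<rho> * scale_hi k \<le> scale_lo k"
proof -
  define k where "k = prod_encode (j, nat \<lceil>2 / (1 - \<rho>)\<rceil> + 2)"
  have k: "nat \<lceil>2 / (1 - \<rho>)\<rceil> + 2 \<le> k" unfolding k_def by (rule le_prod_encode_2)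
  then have "2 / (1 - \<rho>) \<le> real k + 2" by linarith
  then have "2 \<le> (real k + 2) * (1 - \<rho>)" using \<rho> by (simp add: divide_le_eq)
  then have "eps k \<le> (1 - \<rho>) / 2" unfolding eps_def by (simp add: divide_le_eq field_simps)
  moreover have "\<rho> * eps k \<le> eps k" using \<rho>(2) eps_pos[of k] by simp
  ultimately have "\<rho> * (1 + eps k) \<le> 1 - eps k" by (simp add: algebra_simps)
  then have "\<rho> * scale_hi k \<le> scale_lo k"
    unfolding scale_hi_def scale_lo_def using crit_ge_half mult_left_mono[of _ _ crit]
    by (simp add: mult.left_commute)
  moreover have "fst (prod_decode k) = j" unfolding k_def by simp
  ultimately show ?thesis using k by auto
qed

lemma step_block_le_embed:
  assumes "fst (prod_decode k) = j"
  shows "\<bar>a j\<bar> / scale_hi k * step_block (cut_point k) (cut_point (Suc k)) i \<le> \<bar>embed a i\<bar>"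
proof (cases "cut_point k \<le> i \<and> i < cut_point (Suc k)")
  case True
  then have "block_index cut_point i = k" by (intro block_index_eqI[OF strict_mono_cut_point]) auto
  moreover have "cut_point 0 \<le> i"
    using True strict_mono_less_eq[OF strict_mono_cut_point, of 0 k] by simp
  ultimately show ?thesis using True assms step_pos[of i] scale_hi_ge[of k]
    by (simp add: embed_def base_def tail_def step_block_def abs_mult)
next
  case False
  then have "step_block (cut_point k) (cut_point (Suc k)) i = 0"
    unfolding step_block_def by (simp only: if_not_P[OF False] if_False)
  then show ?thesis by simp
qed

text \<open>The coordinate \<open>a\<^sub>j\<close> reappears on blocks \<open>k\<close> of arbitrarily large index, where
  \<open>scale_hi k / scale_lo k\<close> is arbitrarily close to \<open>1\<close>; an admissible \<open>r < \<bar>a\<^sub>j\<bar>\<close> would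
  make such a block bounded, contradicting the choice of the cut points.\<close>
lemma abs_le_of_embed_admissible:
  assumes adm: "CL_admissible X N F (cesaro (\<lambda>n. \<bar>embed a n\<bar>)) r"
  shows "\<bar>a j\<bar> \<le> r"
proof (rule ccontr)
  let ?A = "\<bar>a j\<bar>"
  assume "\<not> ?A \<le> r"
  moreover have r: "0 < r" using adm unfolding CL_admissible_def by blast
  ultimately have A: "0 < ?A" "r < ?A" by auto
  then obtain k where k: "fst (prod_decode k) = j" "2 \<le> k" "r / ?A * scale_hi k \<le> scale_lo k"
    using exists_block_of_coordinate[of "r / ?A" j] r by auto
  have ratio: "r * scale_hi k \<le> ?A * scale_lo k"
    using k(3) A by (simp add: field_simps)
  let ?b = "step_block (cut_point k) (cut_point (Suc k))"
  have le: "\<bar>cesaro ?b n / scale_lo k\<bar> \<le> \<bar>cesaro (\<lambda>n. \<bar>embed a n\<bar>) n / r\<bar>" for n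
  proof -
    have b: "0 \<le> cesaro ?b n" by (rule cesaro_nonneg[OF step_block_nonneg])
    have "cesaro ?b n / scale_lo k \<le> ?A / scale_hi k * cesaro ?b n / r"
      using mult_left_mono[OF ratio b] r scale_hi_ge[of k] scale_lo_pos[of k]
      by (simp add: field_simps)
    also have "\<dots> = cesaro (\<lambda>i. ?A / scale_hi k * ?b i) n / r"
      using cesaro_cmult[of "?A / scale_hi k" ?b n] by simp
    also have "\<dots> \<le> cesaro (\<lambda>n. \<bar>embed a n\<bar>) n / r"
      using step_block_le_embed[OF k(1)] r by (intro divide_right_mono cesaro_mono) auto
    finally show ?thesis
      using b scale_lo_pos[of k] r cesaro_nonneg[of "\<lambda>n. \<bar>embed a n\<bar>" n] by simp
  qed
  have "F_in X F (\<lambda>n. cesaro ?b n / scale_lo k) \<and>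
      N (Fcomp F (\<lambda>n. cesaro ?b n / scale_lo k))
        \<le> N (Fcomp F (\<lambda>n. cesaro (\<lambda>n. \<bar>embed a n\<bar>) n / r))"
    by (rule F_in_mono[OF le]) (use adm in \<open>simp add: CL_admissible_def\<close>)
  with adm k(2) have "block_bounded k (cut_point k) (cut_point (Suc k))"
    unfolding CL_admissible_def block_bounded_def by auto
  with cut_point_not_block_bounded show False ..
qed

lemma cesaro_norm_embed:
  assumes a: "a \<in> linf"
  shows "cesaro_norm X N F (embed a) = linf_norm a"
proof -
  have "{r. CL_admissible X N F (cesaro (\<lambda>n. \<bar>embed a n\<bar>)) r} = {r. 0 < r \<and> linf_norm a \<le> r}"
  proof (intro set_eqI iffI)
    fix r
    assume "r \<in> {r. CL_admissible X N F (cesaro (\<lambda>n. \<bar>embed a n\<bar>)) r}"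
    then have adm: "CL_admissible X N F (cesaro (\<lambda>n. \<bar>embed a n\<bar>)) r" by simp
    then have "0 < r" unfolding CL_admissible_def by blast
    moreover have "linf_norm a \<le> r" by (rule linf_norm_le[OF abs_le_of_embed_admissible[OF adm]])
    ultimately show "r \<in> {r. 0 < r \<and> linf_norm a \<le> r}" by simp
  qed (simp add: embed_admissible[OF a])
  then show ?thesis
    unfolding cesaro_norm_def CL_norm_def
    using Inf_pos_ge[OF order_trans[OF abs_ge_zero linf_abs_le_norm[OF a]]] by simp
qed

lemma embed_mem: "a \<in> linf \<Longrightarrow> embed a \<in> cesaro_space X N F"
  using embed_admissible[of a "linf_norm a + 1"] order_trans[OF abs_ge_zero linf_abs_le_norm]
  unfolding cesaro_space_def CL_space_def by fastforce

lemma embed_add: "embed (\<lambda>n. a n + b n) = (\<lambda>n. embed a n + embed b n)"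
  unfolding embed_def by (simp add: fun_eq_iff algebra_simps)

lemma embed_scale: "embed (\<lambda>n. c * a n) = (\<lambda>n. c * embed a n)"
  unfolding embed_def by (simp add: fun_eq_iff algebra_simps)

lemma embed_max: "embed (\<lambda>n. max (a n) (b n)) = (\<lambda>n. max (embed a n) (embed b n))"
  unfolding embed_def by (simp add: fun_eq_iff max_mult_distrib_right base_nonneg)

end

theorem corollary4p3:
  fixes X :: "(nat \<Rightarrow> real) set" and N :: "(nat \<Rightarrow> real) \<Rightarrow> real"
    and F :: "real \<Rightarrow> ereal"
  assumes "ri_seq_space X N"
    and "order_continuous X N"
    and "fatou_property X N"
    and "orlicz F"
    and "CL_class_closed_under_cesaro X N F"
    and "\<forall>u>0. F u \<noteq> 0"
    and "\<not> delta2_zero F"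
  shows "contains_lattice_isometric_linf (cesaro_space X N F) (cesaro_norm X N F)"
proof -
  interpret cesaro_closed_non_delta2 X N F
    using assms by unfold_locales auto
  show ?thesis
    unfolding contains_lattice_isometric_linf_def
    using embed_mem embed_add embed_scale cesaro_norm_embed embed_max by blast
qed

end
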